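(* For $n\ge 2$, let $Q_n^B$ denote the number of relative derangements of type $B$ on $[n]$ and $D_n^B$ the number of derangements of type $B$ on $[n]$ (with $D_0^B=1$). Then $$Q_n^B = D_n^B + D_{n-1}^B.$$
   Context: Let $[n]=\{1,\dots,n\}$. A signed permutation on $[n]$ is a bijection $\pi$ of $\{\bar 1,\dots,\bar n,1,\dots,n\}$ with $\pi(\bar i)=\overline{\pi(i)}$; equivalently, a word $\pi_1\pi_2\cdots\pi_n$ which is an ordinary permutation of $[n]$ in which some entries carry a bar. A derangement of type $B$ on $[n]$ is a signed permutation $\pi_1\cdots\pi_n$ with $\pi_i\neq i$ (as a signed element, i.e. $\pi_i=\bar i$ is allowed) for all $i\in[n]$. A relative derangement of type $B$ on $[n]$ is a signed permutation $\pi_1\cdots\pi_n$ on $[n]$ such that for every $1\le i\le n-1$, the entry $i$ is not immediately followed by $i+1$, and the entry $\bar i$ is not immediately followed by $\overline{i+1}$. *)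

theory Defs
  imports Main
begin

text \<open>A signed permutation on [n] is encoded as the word pi_1 ... pi_n, a list of integers
  of length n; the barred element (bar i) is encoded as the negative integer -i.\<close>

definition signed_perms :: "nat \<Rightarrow> int list set" where
  "signed_perms n = {xs. length xs = n \<and> distinct (map abs xs) \<and>
      set (map abs xs) = {1..int n}}"

definition derangements_B :: "nat \<Rightarrow> int list set" where
  "derangements_B n = {xs \<in> signed_perms n. \<forall>k<n. xs ! k \<noteq> int k + 1}"

definition rel_derangements_B :: "nat \<Rightarrow> int list set" where
  "rel_derangements_B n = {xs \<in> signed_perms n. \<forall>k. k + 1 < n \<longrightarrow>
      (\<forall>i::int. 1 \<le> i \<and> i \<le> int n - 1 \<longrightarrow>
         \<not> (xs ! k = i \<and> xs ! (k+1) = i + 1) \<and> \<not> (xs ! k = - i \<and> xs ! (k+1) = - (i + 1)))}"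

definition D_B :: "nat \<Rightarrow> nat" where
  "D_B n = card (derangements_B n)"

definition Q_B :: "nat \<Rightarrow> nat" where
  "Q_B n = card (rel_derangements_B n)"

end

theory Submission
  imports Defs
begin

text \<open>
  Refine both counts by a statistic: let \<open>Q j n\<close> count the signed permutations of [n] with
  exactly j bonds (adjacent entries i, i+1 or bar i, bar (i+1)) and \<open>F j n\<close> those with exactly
  j fixed points. A signed permutation of [m+1] arises in exactly one way from one of [m] by
  inserting bar (m+1) or m+1 into one of the m+1 gaps; this destroys the bond the gap splits,
  if any, and creates a new bond exactly when the gap follows the entry m or bar m of the same
  sign. Likewise it arises in exactly one way by appending bar (m+1) or m+1 and swapping it with
  the entry at a chosen position p: this destroys the fixed point at p, if any, and creates one
  exactly when m+1 stays at the end. Hence \<open>Q\<close> (for m \<ge> 1) and \<open>F\<close> (for all m) satisfy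
    X j (m+1) = 2 (j+1) X (j+1) m + X (j-1) m + (2m+1-2j) X j m.
  A direct computation shows that \<open>F j n + F j (n-1) - F (j-1) (n-1)\<close> satisfies the same
  recurrence; it agrees with \<open>Q j 1\<close>, so it equals \<open>Q j n\<close> for all n \<ge> 1, and j = 0 is the
  theorem.
\<close>

section \<open>Signed permutations\<close>

lemma mem_signed_perms:
  "xs \<in> signed_perms n \<longleftrightarrow> length xs = n \<and> distinct (map abs xs) \<and> set (map abs xs) = {1..int n}"
  by (simp add: signed_perms_def)

lemma finite_signed_perms: "finite (signed_perms n)"
proof (rule finite_subset)
  show "signed_perms n \<subseteq> {xs. set xs \<subseteq> {-int n..int n} \<and> length xs = n}"
    by (force simp: mem_signed_perms)
  show "finite {xs. set xs \<subseteq> {-int n..int n} \<and> length xs = n}"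
    by (rule finite_lists_length_eq) simp
qed

lemma signed_perms_abs_nth_bounds:
  "xs \<in> signed_perms n \<Longrightarrow> k < n \<Longrightarrow> 1 \<le> \<bar>xs ! k\<bar> \<and> \<bar>xs ! k\<bar> \<le> int n"
  by (force simp: mem_signed_perms)

lemma signed_perms_abs_nth_inj:
  "xs \<in> signed_perms n \<Longrightarrow> i < n \<Longrightarrow> k < n \<Longrightarrow> \<bar>xs ! i\<bar> = \<bar>xs ! k\<bar> \<Longrightarrow> i = k"
  by (auto simp: mem_signed_perms distinct_conv_nth)

lemma signed_perms_abs_nth_surj:
  assumes "xs \<in> signed_perms n" "1 \<le> a" "a \<le> int n"
  obtains k where "k < n" "\<bar>xs ! k\<bar> = a"
proof -
  have "a \<in> set (map abs xs)" using assms by (auto simp: mem_signed_perms)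
  then obtain k where "k < length xs" "\<bar>xs ! k\<bar> = a" by (auto simp: in_set_conv_nth)
  with assms(1) show ?thesis using that by (auto simp: mem_signed_perms)
qed

lemma signed_perms_0: "signed_perms 0 = {[]}"
  by (auto simp: mem_signed_perms)

lemma signed_perms_1: "signed_perms 1 = {[1], [-1]}"
proof (intro equalityI subsetI)
  fix xs assume xs: "xs \<in> signed_perms 1"
  then obtain x where "xs = [x]"
    by (metis One_nat_def length_0_conv length_Suc_conv mem_signed_perms)
  moreover have "\<bar>x\<bar> = 1" using signed_perms_abs_nth_bounds[OF xs, of 0] \<open>xs = [x]\<close> by simp
  ultimately show "xs \<in> {[1], [-1]}" by (auto simp: abs_if split: if_splits)
qed (auto simp: mem_signed_perms)

lemma abs_eq_imp_sign_mult:
  fixes x a :: int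
  assumes "\<bar>x\<bar> = a" "0 < a"
  obtains s where "s \<in> {1, -1}" "x = s * a"
  using assms by (cases "0 \<le> x") (auto intro: that[of 1] that[of "-1"])

section \<open>Inserting into and swapping entries of lists\<close>

definition insert_at :: "nat \<Rightarrow> 'a \<Rightarrow> 'a list \<Rightarrow> 'a list" where
  "insert_at p x xs = take p xs @ x # drop p xs"

lemma length_insert_at [simp]: "length (insert_at p x xs) = Suc (length xs)"
  by (simp add: insert_at_def)

lemma map_insert_at: "map f (insert_at p x xs) = insert_at p (f x) (map f xs)"
  by (simp add: insert_at_def take_map drop_map)

lemma set_insert_at [simp]: "set (insert_at p x xs) = insert x (set xs)"
  using set_append[of "take p xs" "drop p xs"] by (auto simp: insert_at_def)

lemma distinct_insert_at [simp]: "distinct (insert_at p x xs) \<longleftrightarrow> distinct (x # xs)"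
proof -
  have "distinct (x # xs) \<longleftrightarrow> distinct (x # take p xs @ drop p xs)" by simp
  then show ?thesis
    using set_append[of "take p xs" "drop p xs"]
    by (auto simp: insert_at_def simp del: append_take_drop_id)
qed

lemma nth_insert_at_self: "p \<le> length xs \<Longrightarrow> insert_at p x xs ! p = x"
  by (simp add: insert_at_def nth_append)

lemma remove_nth_insert_at:
  "p \<le> length xs \<Longrightarrow> take p (insert_at p x xs) @ drop (Suc p) (insert_at p x xs) = xs"
  by (simp add: insert_at_def)

lemma insert_at_remove_nth: "p < length xs \<Longrightarrow> insert_at p (xs ! p) (take p xs @ drop (Suc p) xs) = xs"
  by (simp add: insert_at_def id_take_nth_drop[symmetric])

lemma last_take_conv_nth: "0 < p \<Longrightarrow> p \<le> length xs \<Longrightarrow> last (take p xs) = xs ! (p - 1)"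
  by (subst last_conv_nth) (auto simp: min_def)

definition swap_entries :: "nat \<Rightarrow> nat \<Rightarrow> 'a list \<Rightarrow> 'a list" where
  "swap_entries i j xs = xs[i := xs ! j, j := xs ! i]"

lemma length_swap_entries [simp]: "length (swap_entries i j xs) = length xs"
  by (simp add: swap_entries_def)

lemma swap_entries_swap_entries: "i < length xs \<Longrightarrow> j < length xs \<Longrightarrow> swap_entries i j (swap_entries i j xs) = xs"
  by (cases "i = j") (auto simp: swap_entries_def nth_list_update list_update_swap)

lemma nth_swap_entries_left: "i < length xs \<Longrightarrow> j < length xs \<Longrightarrow> swap_entries i j xs ! i = xs ! j"
  by (cases "i = j") (auto simp: swap_entries_def nth_list_update)

lemma nth_swap_entries_right: "j < length xs \<Longrightarrow> swap_entries i j xs ! j = xs ! i"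
  by (simp add: swap_entries_def)

lemma distinct_swap_entries [simp]:
  "i < length xs \<Longrightarrow> j < length xs \<Longrightarrow> distinct (swap_entries i j xs) = distinct xs"
  by (simp add: swap_entries_def)

lemma set_swap_entries [simp]: "i < length xs \<Longrightarrow> j < length xs \<Longrightarrow> set (swap_entries i j xs) = set xs"
  by (simp add: swap_entries_def)

lemma map_swap_entries:
  "i < length xs \<Longrightarrow> j < length xs \<Longrightarrow> map f (swap_entries i j xs) = swap_entries i j (map f xs)"
  by (simp add: swap_entries_def map_update)

section \<open>Counting by a statistic\<close>

lemma card_shifted_level_set:
  fixes f :: "'a \<Rightarrow> int"
  assumes "finite P" "C \<subseteq> P" "N \<subseteq> P" "C \<inter> N = {}"
    and f: "\<And>q. q \<in> P \<Longrightarrow> f q = b - (if q \<in> C then 1 else 0) + (if q \<in> N then 1 else 0)"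
  shows "int (card {q \<in> P. f q = j}) =
           (if b = j + 1 then int (card C) else 0) + (if b = j - 1 then int (card N) else 0)
         + (if b = j then int (card P) - int (card C) - int (card N) else 0)"
proof -
  have fin: "finite C" "finite N" using assms(1-3) finite_subset by auto
  have val: "f q = (if q \<in> C then b - 1 else if q \<in> N then b + 1 else b)" if "q \<in> P" for q
    using f[OF that] assms(4) by auto
  have "card (P - (C \<union> N)) = card P - (card C + card N)"
    using assms fin by (simp add: card_Diff_subset card_Un_disjoint)
  moreover have "card C + card N \<le> card P"
    using assms fin by (metis card_Un_disjoint card_mono le_sup_iff)
  moreover have "{q \<in> P. f q = j} =
      (if b = j + 1 then C else if b = j - 1 then N else if b = j then P - (C \<union> N) else {})"
    using assms(2-4) by (auto simp: val split: if_splits) (use assms(3,4) val in force)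
  ultimately show ?thesis by auto
qed

lemma sum_if_eq_const_int:
  fixes c :: int
  assumes "finite A"
  shows "(\<Sum>x\<in>A. if P x then c else 0) = c * int (card {x \<in> A. P x})"
  using sum.inter_filter[OF assms, of "\<lambda>_. c" P, symmetric] by simp

lemma card_level_set_recurrence:
  fixes f :: "'a \<Rightarrow> nat" and \<Phi> :: "'a \<times> 'q \<Rightarrow> 'a"
  assumes bij: "bij_betw \<Phi> (A \<times> P) B" and fin: "finite A" "finite P"
    and C: "\<And>a. a \<in> A \<Longrightarrow> C a \<subseteq> P" "\<And>a. a \<in> A \<Longrightarrow> card (C a) = 2 * f a"
    and N: "\<And>a. a \<in> A \<Longrightarrow> N a \<subseteq> P" "\<And>a. a \<in> A \<Longrightarrow> card (N a) = 1"
    and disj: "\<And>a. a \<in> A \<Longrightarrow> C a \<inter> N a = {}"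
    and shift: "\<And>a q. a \<in> A \<Longrightarrow> q \<in> P \<Longrightarrow>
       int (f (\<Phi> (a, q))) = int (f a) - (if q \<in> C a then 1 else 0) + (if q \<in> N a then 1 else 0)"
  shows "int (card {b \<in> B. int (f b) = j}) =
           2 * (j + 1) * int (card {a \<in> A. int (f a) = j + 1}) + int (card {a \<in> A. int (f a) = j - 1})
         + (int (card P) - 2 * j - 1) * int (card {a \<in> A. int (f a) = j})"
proof -
  let ?L = "\<lambda>k. int (card {a \<in> A. int (f a) = k})"
  have "bij_betw \<Phi> {x \<in> A \<times> P. int (f (\<Phi> x)) = j} {b \<in> B. int (f b) = j}"
    by (rule bij_betw_subset[OF bij]) (use bij in \<open>auto simp: bij_betw_def\<close>)
  moreover have "{x \<in> A \<times> P. int (f (\<Phi> x)) = j} = (SIGMA a:A. {q \<in> P. int (f (\<Phi> (a, q))) = j})"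
    by auto
  ultimately have "card {b \<in> B. int (f b) = j} = card (SIGMA a:A. {q \<in> P. int (f (\<Phi> (a, q))) = j})"
    by (simp add: bij_betw_same_card)
  also have "\<dots> = (\<Sum>a\<in>A. card {q \<in> P. int (f (\<Phi> (a, q))) = j})"
    using fin by simp
  finally have "int (card {b \<in> B. int (f b) = j}) = (\<Sum>a\<in>A. int (card {q \<in> P. int (f (\<Phi> (a, q))) = j}))"
    by simp
  also have "\<dots> = (\<Sum>a\<in>A. (if int (f a) = j + 1 then 2 * (j + 1) else 0)
           + (if int (f a) = j - 1 then 1 else 0) + (if int (f a) = j then int (card P) - 2 * j - 1 else 0))"
  proof (rule sum.cong)
    fix a assume a: "a \<in> A"
    show "int (card {q \<in> P. int (f (\<Phi> (a, q))) = j}) = (if int (f a) = j + 1 then 2 * (j + 1) else 0)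
           + (if int (f a) = j - 1 then 1 else 0) + (if int (f a) = j then int (card P) - 2 * j - 1 else 0)"
      using card_shifted_level_set[OF fin(2) C(1)[OF a] N(1)[OF a] disj[OF a] shift[OF a], of j]
      by (simp add: C(2)[OF a] N(2)[OF a])
  qed simp
  also have "\<dots> = 2 * (j + 1) * ?L (j + 1) + ?L (j - 1) + (int (card P) - 2 * j - 1) * ?L j"
    by (simp only: sum.distrib sum_if_eq_const_int[OF fin(1)])
  finally show ?thesis .
qed

definition count_with :: "(int list \<Rightarrow> nat) \<Rightarrow> int \<Rightarrow> nat \<Rightarrow> int" where
  "count_with f j n = int (card {w \<in> signed_perms n. int (f w) = j})"

lemma count_with_0: "count_with f j 0 = (if int (f []) = j then 1 else 0)"
proof -
  have "{w \<in> {[]}. int (f w) = j} = (if int (f []) = j then {[]} else {})" by auto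
  then show ?thesis by (simp add: count_with_def signed_perms_0)
qed

lemma count_with_1: "count_with f j 1 = (if int (f [1]) = j then 1 else 0) + (if int (f [-1]) = j then 1 else 0)"
proof -
  have "{w \<in> {[1], [-1]}. int (f w) = j} =
      (if int (f [1]) = j then {[1]} else {}) \<union> (if int (f [-1]) = j then {[-1]} else {})" by auto
  then show ?thesis unfolding count_with_def signed_perms_1 by simp
qed

lemma count_with_negative: "j < 0 \<Longrightarrow> count_with f j n = 0"
  by (simp add: count_with_def)

definition insertion_recurrence :: "(int \<Rightarrow> nat \<Rightarrow> int) \<Rightarrow> nat \<Rightarrow> bool" where
  "insertion_recurrence X m \<longleftrightarrow> (\<forall>j. X j (Suc m) =
     2 * (j + 1) * X (j + 1) m + X (j - 1) m + (2 * int (Suc m) - 2 * j - 1) * X j m)"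

lemma insertion_recurrence_difference:
  assumes F: "\<And>m. insertion_recurrence F m"
  shows "insertion_recurrence (\<lambda>j n. F j n + F j (n - 1) - F (j - 1) (n - 1)) (Suc k)"
proof -
  have rec: "F i (Suc n) = 2 * (i + 1) * F (i + 1) n + F (i - 1) n + (2 * int (Suc n) - 2 * i - 1) * F i n"
    for i n using F by (simp add: insertion_recurrence_def)
  have "F j (Suc (Suc k)) + F j (Suc k) - F (j - 1) (Suc k) =
      2 * (j + 1) * (F (j + 1) (Suc k) + F (j + 1) k - F j k) + (F (j - 1) (Suc k) + F (j - 1) k - F (j - 2) k)
    + (2 * int (Suc (Suc k)) - 2 * j - 1) * (F j (Suc k) + F j k - F (j - 1) k)" for j
    unfolding rec[of j "Suc k"] rec[of j k] rec[of "j - 1" k] by (simp add: algebra_simps)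
  then show ?thesis by (simp add: insertion_recurrence_def)
qed

lemma insertion_recurrence_unique:
  assumes "\<And>m. 1 \<le> m \<Longrightarrow> insertion_recurrence X m" "\<And>m. 1 \<le> m \<Longrightarrow> insertion_recurrence Y m"
    and "\<And>j. X j 1 = Y j 1" and "1 \<le> n"
  shows "X j n = Y j n"
  using assms(4)
proof (induction n arbitrary: j rule: nat_induct_at_least)
  case (Suc m)
  then show ?case using assms(1,2)[OF Suc.hyps] by (simp add: insertion_recurrence_def)
qed (use assms(3) in simp)

section \<open>Bonds\<close>

definition bond :: "int \<Rightarrow> int \<Rightarrow> bool" where
  "bond a b \<longleftrightarrow> (0 < a \<and> b = a + 1) \<or> (a < 0 \<and> b = a - 1)"

fun bonds :: "int list \<Rightarrow> nat" where
  "bonds (a # b # xs) = (if bond a b then 1 else 0) + bonds (b # xs)"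
| "bonds _ = 0"

definition bond_positions :: "int list \<Rightarrow> nat set" where
  "bond_positions xs = {p. 0 < p \<and> p < length xs \<and> bond (xs ! (p - 1)) (xs ! p)}"

lemma bond_iff_sgn: "bond a b \<longleftrightarrow> a \<noteq> 0 \<and> b = sgn a * (\<bar>a\<bar> + 1)"
  by (auto simp: bond_def sgn_if)

lemma abs_bond: "bond a b \<Longrightarrow> \<bar>b\<bar> = \<bar>a\<bar> + 1"
  by (auto simp: bond_def)

lemma bond_unique: "bond a b \<Longrightarrow> bond a c \<Longrightarrow> b = c"
  by (simp add: bond_iff_sgn)

lemma bonds_Cons: "bonds (a # xs) = (if xs \<noteq> [] \<and> bond a (hd xs) then 1 else 0) + bonds xs"
  by (cases xs) auto

lemma bonds_append:
  "bonds (xs @ ys) = bonds xs + bonds ys + (if xs \<noteq> [] \<and> ys \<noteq> [] \<and> bond (last xs) (hd ys) then 1 else 0)"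
  by (induction xs) (auto simp: bonds_Cons)

lemma bond_positions_subset: "bond_positions xs \<subseteq> {..<length xs}"
  by (auto simp: bond_positions_def)

lemma finite_bond_positions: "finite (bond_positions xs)"
  by (rule finite_subset[OF bond_positions_subset]) simp

lemma bond_positions_Cons:
  "xs \<noteq> [] \<Longrightarrow> bond_positions (a # xs) = (if bond a (hd xs) then {1} else {}) \<union> Suc ` bond_positions xs"
  by (auto simp: bond_positions_def hd_conv_nth gr0_conv_Suc nth_Cons' image_iff split: if_splits)

lemma card_bond_positions: "card (bond_positions xs) = bonds xs"
proof (induction xs)
  case (Cons a xs)
  have "1 \<notin> Suc ` bond_positions xs" by (auto simp: bond_positions_def)
  with Cons finite_bond_positions[of xs] show ?case
    by (cases "xs = []") (auto simp: bond_positions_Cons bonds_Cons card_image, auto simp: bond_positions_def)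
qed (simp add: bond_positions_def)

lemma bonds_eq_0_iff: "bonds xs = 0 \<longleftrightarrow> (\<forall>k. Suc k < length xs \<longrightarrow> \<not> bond (xs ! k) (xs ! Suc k))"
proof -
  have "bonds xs = 0 \<longleftrightarrow> bond_positions xs = {}"
    by (simp flip: card_bond_positions add: finite_bond_positions)
  also have "\<dots> \<longleftrightarrow> (\<forall>k. Suc k < length xs \<longrightarrow> \<not> bond (xs ! k) (xs ! Suc k))"
    by (auto simp: bond_positions_def gr0_conv_Suc)
  finally show ?thesis .
qed

lemma bond_positions_split:
  "p \<in> bond_positions xs \<longleftrightarrow> take p xs \<noteq> [] \<and> drop p xs \<noteq> [] \<and> bond (last (take p xs)) (hd (drop p xs))"
  by (auto simp: bond_positions_def last_take_conv_nth hd_drop_conv_nth)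

lemma rel_derangements_B_eq: "rel_derangements_B n = {xs \<in> signed_perms n. bonds xs = 0}"
proof -
  have "(\<forall>i::int. 1 \<le> i \<and> i \<le> int n - 1 \<longrightarrow>
          \<not> (xs ! k = i \<and> xs ! (k + 1) = i + 1) \<and> \<not> (xs ! k = - i \<and> xs ! (k + 1) = - (i + 1)))
        \<longleftrightarrow> \<not> bond (xs ! k) (xs ! Suc k)"
    if "xs \<in> signed_perms n" "k + 1 < n" for xs k
    using signed_perms_abs_nth_bounds[OF that] by (auto simp: bond_def) (smt (verit))+
  moreover have "length xs = n" if "xs \<in> signed_perms n" for xs
    using that by (simp add: mem_signed_perms)
  ultimately show ?thesis
    unfolding rel_derangements_B_def bonds_eq_0_iff by (intro Collect_cong conj_cong refl) auto
qed

lemma insert_at_signed_perms: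
  assumes "w \<in> signed_perms m" "\<bar>x\<bar> = int (Suc m)"
  shows "insert_at p x w \<in> signed_perms (Suc m)"
proof -
  have "int (Suc m) \<notin> set (map abs w)" and "insert (int (Suc m)) {1..int m} = {1..int (Suc m)}"
    using assms by (auto simp: mem_signed_perms)
  with assms show ?thesis by (auto simp: mem_signed_perms map_insert_at)
qed

lemma remove_max_signed_perms:
  assumes pi: "pi \<in> signed_perms (Suc m)" and p: "p \<le> m" "\<bar>pi ! p\<bar> = int (Suc m)"
  shows "take p pi @ drop (Suc p) pi \<in> signed_perms m"
proof -
  define w where "w = take p pi @ drop (Suc p) pi"
  have len: "length pi = Suc m" using pi by (simp add: mem_signed_perms)
  then have "pi = insert_at p (pi ! p) w"
    using insert_at_remove_nth[of p pi] p by (simp add: w_def)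
  then have "map abs pi = insert_at p (int (Suc m)) (map abs w)"
    by (metis map_insert_at p(2))
  then have D: "distinct (int (Suc m) # map abs w)" and S: "insert (int (Suc m)) (set (map abs w)) = {1..int (Suc m)}"
    using pi unfolding mem_signed_perms by simp_all
  moreover have "set (map abs w) = {1..int m}"
  proof -
    have "set (map abs w) = {1..int (Suc m)} - {int (Suc m)}"
      using S D by (metis Diff_insert_absorb distinct.simps(2))
    then show ?thesis by auto
  qed
  moreover have "length w = m" using len p by (simp add: w_def)
  ultimately show ?thesis by (simp add: w_def mem_signed_perms)
qed

lemma bij_betw_insert_max:
  "bij_betw (\<lambda>(w, p, s). insert_at p (s * int (Suc m)) w)
     (signed_perms m \<times> ({..m} \<times> {1, -1})) (signed_perms (Suc m))"
  unfolding bij_betw_def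
proof (intro conjI inj_onI subset_antisym subsetI)
  fix u v assume u: "u \<in> signed_perms m \<times> ({..m} \<times> {1, -1})" and v: "v \<in> signed_perms m \<times> ({..m} \<times> {1, -1})"
    and eq: "(\<lambda>(w, p, s). insert_at p (s * int (Suc m)) w) u = (\<lambda>(w, p, s). insert_at p (s * int (Suc m)) w) v"
  obtain w p s w' p' s' where uv: "u = (w, p, s)" "v = (w', p', s')" by (cases u, cases v) auto
  define pi where "pi = insert_at p (s * int (Suc m)) w"
  have w: "w \<in> signed_perms m" "length w = m" "p \<le> m" "s \<in> {1, -1}"
   and w': "w' \<in> signed_perms m" "length w' = m" "p' \<le> m" "s' \<in> {1, -1}"
    using u v uv by (auto simp: mem_signed_perms)
  have pi': "pi = insert_at p' (s' * int (Suc m)) w'" using eq uv by (simp add: pi_def)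
  have "pi \<in> signed_perms (Suc m)" using w by (auto simp: pi_def intro: insert_at_signed_perms)
  moreover have "pi ! p = s * int (Suc m)" using w by (simp add: pi_def nth_insert_at_self)
  moreover have "pi ! p' = s' * int (Suc m)" using w' by (simp add: pi' nth_insert_at_self)
  ultimately have "p = p'"
    using w w' by (intro signed_perms_abs_nth_inj[of pi "Suc m"]) (auto simp: abs_mult)
  moreover from this have "s = s'" using \<open>pi ! p = _\<close> \<open>pi ! p' = _\<close> by simp
  moreover have "w = w'"
    using remove_nth_insert_at[of p w] remove_nth_insert_at[of p' w'] w w' pi' \<open>p = p'\<close> \<open>s = s'\<close>
    unfolding pi_def by metis
  ultimately show "u = v" using uv by simp
next
  fix pi assume "pi \<in> (\<lambda>(w, p, s). insert_at p (s * int (Suc m)) w) ` (signed_perms m \<times> ({..m} \<times> {1, -1}))"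
  then show "pi \<in> signed_perms (Suc m)" by (auto intro: insert_at_signed_perms simp: abs_mult)
next
  fix pi assume pi: "pi \<in> signed_perms (Suc m)"
  obtain p where p: "p < Suc m" "\<bar>pi ! p\<bar> = int (Suc m)"
    using signed_perms_abs_nth_surj[OF pi, of "int (Suc m)"] by auto
  obtain s where s: "s \<in> {1, -1}" "pi ! p = s * int (Suc m)"
    using abs_eq_imp_sign_mult[OF p(2)] by auto
  have "pi = insert_at p (pi ! p) (take p pi @ drop (Suc p) pi)"
    using pi p by (simp add: insert_at_remove_nth mem_signed_perms)
  moreover have "take p pi @ drop (Suc p) pi \<in> signed_perms m"
    using remove_max_signed_perms[OF pi _ p(2)] p(1) by simp
  ultimately show "pi \<in> (\<lambda>(w, p, s). insert_at p (s * int (Suc m)) w) ` (signed_perms m \<times> ({..m} \<times> {1, -1}))"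
    using p(1) s by (auto intro!: image_eqI[where x = "(take p pi @ drop (Suc p) pi, p, s)"])
qed

lemma bonds_insert_between:
  "int (bonds (ys @ x # zs)) = int (bonds (ys @ zs))
     - (if ys \<noteq> [] \<and> zs \<noteq> [] \<and> bond (last ys) (hd zs) then 1 else 0)
     + (if ys \<noteq> [] \<and> bond (last ys) x then 1 else 0) + (if zs \<noteq> [] \<and> bond x (hd zs) then 1 else 0)"
  by (simp add: bonds_append bonds_Cons)

lemma bonds_insert_max:
  assumes w: "w \<in> signed_perms m" and p: "p \<le> m" and x: "\<bar>x\<bar> = int (Suc m)"
  shows "int (bonds (insert_at p x w)) =
           int (bonds w) - (if p \<in> bond_positions w then 1 else 0) + (if 0 < p \<and> bond (w ! (p - 1)) x then 1 else 0)"
proof -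
  have len: "length w = m" using w by (simp add: mem_signed_perms)
  have no_bond_after: "\<not> (drop p w \<noteq> [] \<and> bond x (hd (drop p w)))"
  proof
    assume "drop p w \<noteq> [] \<and> bond x (hd (drop p w))"
    then have "p < m" "\<bar>w ! p\<bar> = int m + 2" using abs_bond x len by (auto simp: hd_drop_conv_nth)
    with signed_perms_abs_nth_bounds[OF w] show False by fastforce
  qed
  have bond_before: "(take p w \<noteq> [] \<and> bond (last (take p w)) x) \<longleftrightarrow> 0 < p \<and> bond (w ! (p - 1)) x"
    using p len by (auto simp: last_take_conv_nth)
  show ?thesis
    using bonds_insert_between[of "take p w" x "drop p w"]
    unfolding insert_at_def append_take_drop_id bond_positions_split[symmetric] bond_before
    by (simp only: no_bond_after if_False add_0_right)
qed

lemma bonds_onto_max: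
  assumes w: "w \<in> signed_perms m" and m: "1 \<le> m"
  obtains i where "{(p, s) \<in> {..m} \<times> {1, -1}. 0 < p \<and> bond (w ! (p - 1)) (s * int (Suc m))} = {(Suc i, sgn (w ! i))}"
proof -
  obtain i where i: "i < m" "\<bar>w ! i\<bar> = int m"
    using signed_perms_abs_nth_surj[OF w, of "int m"] m by auto
  have "0 < p \<and> bond (w ! (p - 1)) (s * int (Suc m)) \<longleftrightarrow> p = Suc i \<and> s = sgn (w ! i)"
    if "p \<le> m" "s \<in> {1, -1}" for p s
  proof
    assume bond: "0 < p \<and> bond (w ! (p - 1)) (s * int (Suc m))"
    then have "\<bar>w ! (p - 1)\<bar> = int m"
      using abs_bond[of "w ! (p - 1)" "s * int (Suc m)"] that(2) by (auto simp: abs_mult)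
    moreover have "p - 1 < m" using bond that(1) by auto
    ultimately have "p - 1 = i" using signed_perms_abs_nth_inj[OF w _ i(1)] i(2) by simp
    with bond have "p = Suc i" by auto
    with bond i have "s * int (Suc m) = sgn (w ! i) * int (Suc m)" by (simp add: bond_iff_sgn)
    with \<open>p = Suc i\<close> show "p = Suc i \<and> s = sgn (w ! i)" by simp
  next
    assume "p = Suc i \<and> s = sgn (w ! i)"
    with i m show "0 < p \<and> bond (w ! (p - 1)) (s * int (Suc m))" by (auto simp: bond_iff_sgn)
  qed
  moreover have "Suc i \<le> m" "sgn (w ! i) \<in> {1, -1}" using i m by (auto simp: sgn_if)
  ultimately show ?thesis by (intro that) auto
qed

lemma bonds_count_recurrence:
  assumes m: "1 \<le> m"
  shows "insertion_recurrence (count_with bonds) m"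
proof -
  let ?P = "{..m} \<times> {1, -1::int}"
  define C where "C w = bond_positions w \<times> {1, -1::int}" for w
  define N where "N w = {(p, s) \<in> ?P. 0 < p \<and> bond (w ! (p - 1)) (s * int (Suc m))}" for w
  have C_sub: "C w \<subseteq> ?P" if "w \<in> signed_perms m" for w
    using bond_positions_subset[of w] that by (auto simp: C_def mem_signed_perms)
  have card_C: "card (C w) = 2 * bonds w" if "w \<in> signed_perms m" for w
    by (simp add: C_def card_cartesian_product card_bond_positions)
  have N_sub: "N w \<subseteq> ?P" if "w \<in> signed_perms m" for w by (auto simp: N_def)
  have card_N: "card (N w) = 1" if w: "w \<in> signed_perms m" for w
  proof -
    obtain i where "N w = {(Suc i, sgn (w ! i))}" using bonds_onto_max[OF w m] unfolding N_def by blast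
    then show ?thesis by simp
  qed
  have disjoint: "C w \<inter> N w = {}" if w: "w \<in> signed_perms m" for w
  proof (safe)
    fix p s assume "(p, s) \<in> C w" "(p, s) \<in> N w"
    then have "w ! p = s * int (Suc m)" "s \<in> {1, -1}" "p < length w"
      using bond_unique by (auto simp: C_def N_def bond_positions_def)
    with w show "(p, s) \<in> {}"
      using signed_perms_abs_nth_bounds[OF w, of p] by (auto simp: mem_signed_perms)
  qed
  have shift: "int (bonds ((\<lambda>(w, p, s). insert_at p (s * int (Suc m)) w) (w, q))) =
      int (bonds w) - (if q \<in> C w then 1 else 0) + (if q \<in> N w then 1 else 0)"
    if w: "w \<in> signed_perms m" and q: "q \<in> ?P" for w q
  proof -
    obtain p s where ps: "q = (p, s)" "p \<le> m" "s \<in> {1, -1}" using q by auto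
    then have "\<bar>s * int (Suc m)\<bar> = int (Suc m)" by (auto simp: abs_mult)
    from bonds_insert_max[OF w ps(2) this] show ?thesis using ps by (simp add: C_def N_def)
  qed
  show ?thesis
    using card_level_set_recurrence[where f = bonds, OF bij_betw_insert_max finite_signed_perms _
        C_sub card_C N_sub card_N disjoint shift]
    by (simp add: insertion_recurrence_def count_with_def card_cartesian_product)
qed

section \<open>Fixed points\<close>

definition fixed_points :: "int list \<Rightarrow> nat set" where
  "fixed_points xs = {k. k < length xs \<and> xs ! k = int k + 1}"

lemma fixed_points_subset: "fixed_points xs \<subseteq> {..<length xs}"
  by (auto simp: fixed_points_def)

lemma finite_fixed_points: "finite (fixed_points xs)"
  by (rule finite_subset[OF fixed_points_subset]) simp

lemma derangements_B_eq: "derangements_B n = {xs \<in> signed_perms n. card (fixed_points xs) = 0}"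
  by (auto simp: derangements_B_def finite_fixed_points fixed_points_def mem_signed_perms)

lemma swap_entries_signed_perms:
  assumes "xs \<in> signed_perms n" "i < n" "j < n"
  shows "swap_entries i j xs \<in> signed_perms n"
  using assms by (simp add: mem_signed_perms map_swap_entries)

lemma append_max_signed_perms:
  "w \<in> signed_perms m \<Longrightarrow> \<bar>x\<bar> = int (Suc m) \<Longrightarrow> w @ [x] \<in> signed_perms (Suc m)"
  using insert_at_signed_perms[of w m x m] by (simp add: insert_at_def mem_signed_perms)

lemma swap_max_signed_perms:
  assumes "w \<in> signed_perms m" "p \<le> m" "s \<in> {1, -1}"
  shows "swap_entries p m (w @ [s * int (Suc m)]) \<in> signed_perms (Suc m)"
proof (rule swap_entries_signed_perms[OF append_max_signed_perms[OF assms(1)]])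
  show "\<bar>s * int (Suc m)\<bar> = int (Suc m)" using assms(3) by (auto simp: abs_mult)
qed (use assms(2) in auto)

lemma bij_betw_swap_max:
  "bij_betw (\<lambda>(w, p, s). swap_entries p m (w @ [s * int (Suc m)]))
     (signed_perms m \<times> ({..m} \<times> {1, -1})) (signed_perms (Suc m))"
  unfolding bij_betw_def
proof (intro conjI inj_onI subset_antisym subsetI)
  fix u v assume u: "u \<in> signed_perms m \<times> ({..m} \<times> {1, -1})" and v: "v \<in> signed_perms m \<times> ({..m} \<times> {1, -1})"
    and eq: "(\<lambda>(w, p, s). swap_entries p m (w @ [s * int (Suc m)])) u
           = (\<lambda>(w, p, s). swap_entries p m (w @ [s * int (Suc m)])) v"
  obtain w p s w' p' s' where uv: "u = (w, p, s)" "v = (w', p', s')" by (cases u, cases v) auto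
  define pi where "pi = swap_entries p m (w @ [s * int (Suc m)])"
  have w: "w \<in> signed_perms m" "length w = m" "p \<le> m" "s \<in> {1, -1}"
   and w': "w' \<in> signed_perms m" "length w' = m" "p' \<le> m" "s' \<in> {1, -1}"
    using u v uv by (auto simp: mem_signed_perms)
  have pi': "pi = swap_entries p' m (w' @ [s' * int (Suc m)])" using eq uv by (simp add: pi_def)
  have "pi \<in> signed_perms (Suc m)" unfolding pi_def using w(1,3,4) by (rule swap_max_signed_perms)
  moreover have "pi ! p = s * int (Suc m)" using w by (simp add: pi_def nth_swap_entries_left nth_append)
  moreover have "pi ! p' = s' * int (Suc m)" using w' by (simp add: pi' nth_swap_entries_left nth_append)
  ultimately have "p = p'"
    using w w' by (intro signed_perms_abs_nth_inj[of pi "Suc m"]) (auto simp: abs_mult)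
  moreover from this have "s = s'" using \<open>pi ! p = _\<close> \<open>pi ! p' = _\<close> by simp
  moreover have "w @ [s * int (Suc m)] = swap_entries p m pi"
    using swap_entries_swap_entries[of p "w @ [s * int (Suc m)]" m] w by (simp add: pi_def)
  moreover have "w' @ [s' * int (Suc m)] = swap_entries p' m pi"
    using swap_entries_swap_entries[of p' "w' @ [s' * int (Suc m)]" m] w' by (simp add: pi')
  ultimately show "u = v" using uv by (metis append1_eq_conv)
next
  fix pi assume "pi \<in> (\<lambda>(w, p, s). swap_entries p m (w @ [s * int (Suc m)])) ` (signed_perms m \<times> ({..m} \<times> {1, -1}))"
  then obtain w p s where "w \<in> signed_perms m" "p \<le> m" "s \<in> {1, -1}"
    and "pi = swap_entries p m (w @ [s * int (Suc m)])" by auto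
  then show "pi \<in> signed_perms (Suc m)" by (metis swap_max_signed_perms)
next
  fix pi assume pi: "pi \<in> signed_perms (Suc m)"
  then have len: "length pi = Suc m" by (simp add: mem_signed_perms)
  obtain p where p: "p < Suc m" "\<bar>pi ! p\<bar> = int (Suc m)"
    using signed_perms_abs_nth_surj[OF pi, of "int (Suc m)"] by auto
  obtain s where s: "s \<in> {1, -1}" "pi ! p = s * int (Suc m)"
    using abs_eq_imp_sign_mult[OF p(2)] by auto
  define ys where "ys = swap_entries p m pi"
  have ys: "ys \<in> signed_perms (Suc m)" "ys ! m = s * int (Suc m)"
    using swap_entries_signed_perms[OF pi p(1), of m] nth_swap_entries_right[of m pi p] len s
    by (simp_all add: ys_def)
  have "drop (Suc m) ys = []" using len by (simp add: ys_def)
  then have "take m ys \<in> signed_perms m"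
    using remove_max_signed_perms[OF ys(1), of m] ys(2) s by (auto simp: abs_mult)
  moreover have "ys = take m ys @ [s * int (Suc m)]"
    using ys len by (metis length_swap_entries take_Suc_conv_app_nth lessI take_all order_refl ys_def)
  moreover have "pi = swap_entries p m ys"
    using swap_entries_swap_entries[of p pi m] p len by (simp add: ys_def)
  ultimately show "pi \<in> (\<lambda>(w, p, s). swap_entries p m (w @ [s * int (Suc m)])) ` (signed_perms m \<times> ({..m} \<times> {1, -1}))"
    using p(1) s by (auto intro!: image_eqI[where x = "(take m ys, p, s)"])
qed

lemma fixed_points_swap_max:
  assumes w: "w \<in> signed_perms m" and p: "p \<le> m" and s: "s \<in> {1, -1}"
  shows "fixed_points (swap_entries p m (w @ [s * int (Suc m)])) =
           fixed_points w - {p} \<union> (if p = m \<and> s = 1 then {m} else {})"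
proof -
  have len: "length w = m" using w by (simp add: mem_signed_perms)
  have "\<bar>w ! p\<bar> \<le> int m" if "p < m" using signed_perms_abs_nth_bounds[OF w that] by simp
  then have "w ! p \<noteq> int m + 1" if "p < m" using that by fastforce
  then show ?thesis
    using p s len by (auto simp: fixed_points_def swap_entries_def nth_list_update nth_append)
qed

lemma fixed_points_count_recurrence: "insertion_recurrence (count_with (card \<circ> fixed_points)) m"
proof -
  let ?P = "{..m} \<times> {1, -1::int}"
  define C where "C w = fixed_points w \<times> {1, -1::int}" for w
  define N where "N w = {(m, 1::int)}" for w :: "int list"
  have C_sub: "C w \<subseteq> ?P" if "w \<in> signed_perms m" for w
    using fixed_points_subset[of w] that by (auto simp: C_def mem_signed_perms)
  have card_C: "card (C w) = 2 * (card \<circ> fixed_points) w" if "w \<in> signed_perms m" for w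
    by (simp add: C_def card_cartesian_product)
  have N_sub: "N w \<subseteq> ?P" if "w \<in> signed_perms m" for w by (simp add: N_def)
  have card_N: "card (N w) = 1" if "w \<in> signed_perms m" for w by (simp add: N_def)
  have disjoint: "C w \<inter> N w = {}" if "w \<in> signed_perms m" for w
    using fixed_points_subset[of w] that by (auto simp: C_def N_def mem_signed_perms)
  have shift: "int ((card \<circ> fixed_points) ((\<lambda>(w, p, s). swap_entries p m (w @ [s * int (Suc m)])) (w, q))) =
      int ((card \<circ> fixed_points) w) - (if q \<in> C w then 1 else 0) + (if q \<in> N w then 1 else 0)"
    if w: "w \<in> signed_perms m" and q: "q \<in> ?P" for w q
  proof -
    obtain p s where ps: "q = (p, s)" "p \<le> m" "s \<in> {1, -1}" using q by auto
    have "m \<notin> fixed_points w" using fixed_points_subset[of w] w by (auto simp: mem_signed_perms)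
    moreover have "0 < card (fixed_points w)" if "p \<in> fixed_points w"
      using that finite_fixed_points[of w] card_gt_0_iff by blast
    ultimately show ?thesis
      using fixed_points_swap_max[OF w ps(2,3)] ps finite_fixed_points[of w]
      by (auto simp: C_def N_def card_Diff_singleton_if)
  qed
  show ?thesis
    using card_level_set_recurrence[where f = "card \<circ> fixed_points", OF bij_betw_swap_max finite_signed_perms _
        C_sub card_C N_sub card_N disjoint shift]
    by (simp add: insertion_recurrence_def count_with_def card_cartesian_product)
qed

lemma bonds_count_eq_fixed_points_difference:
  assumes "1 \<le> n"
  shows "count_with bonds j n = count_with (card \<circ> fixed_points) j n + count_with (card \<circ> fixed_points) j (n - 1)
           - count_with (card \<circ> fixed_points) (j - 1) (n - 1)"
proof -
  let ?F = "count_with (card \<circ> fixed_points)"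
  have "fixed_points [] = {}" "fixed_points [1] = {0}" "fixed_points [-1] = {}"
    by (auto simp: fixed_points_def)
  then have base: "count_with bonds j 1 = ?F j 1 + ?F j (1 - 1) - ?F (j - 1) (1 - 1)" for j
    unfolding count_with_1 diff_self_eq_0 count_with_0 by simp
  show ?thesis
  proof (rule insertion_recurrence_unique[where Y = "\<lambda>j n. ?F j n + ?F j (n - 1) - ?F (j - 1) (n - 1)",
        OF bonds_count_recurrence _ base assms])
    show "insertion_recurrence (\<lambda>j n. ?F j n + ?F j (n - 1) - ?F (j - 1) (n - 1)) m" if "1 \<le> m" for m
      using that insertion_recurrence_difference[OF fixed_points_count_recurrence, of "m - 1"] by simp
  qed
qed

theorem theorem1:
  fixes n :: nat
  assumes "n \<ge> 2"
  shows "Q_B n = D_B n + D_B (n - 1)"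
proof -
  have "int (Q_B n) = count_with bonds 0 n"
    by (simp add: Q_B_def count_with_def rel_derangements_B_eq)
  also have "\<dots> = count_with (card \<circ> fixed_points) 0 n + count_with (card \<circ> fixed_points) 0 (n - 1)"
    using bonds_count_eq_fixed_points_difference[of n 0] assms by (simp add: count_with_negative)
  also have "\<dots> = int (D_B n) + int (D_B (n - 1))"
    by (simp add: D_B_def count_with_def derangements_B_eq)
  finally show ?thesis by simp
qed

end
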